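(* Let $H$ be a combinatorial Hopf monoid, $K\subseteq H$ a Hopf submonoid, $I$ a finite set and $h\in H_I$. Let $\Delta_h$ be the set of set compositions $C$ of $I$ all of whose minors $h_j$ are defined, and let $\Gamma_{K,h}\subseteq\Delta_h$ be the set of those $C\in\Delta_h$ such that some minor $h_j\notin K_{C_j}$. Then: (1) if $C\in\Gamma_{K,h}$ and $D\in\Delta_h$ is a coarsening of $C$ (each block of $D$ is a union of consecutive blocks of $C$, in order), then $D\in\Gamma_{K,h}$; (2) $\Psi_{\varphi_K}(h)=\sum_{C\in\Delta_h\setminus\Gamma_{K,h}}M_{\mathrm{type}(C)}$, i.e. $\Psi_{\varphi_K}(h)$ is the Ehrhart quasisymmetric function $E_{C(\Delta_h\setminus\Gamma_{K,h})}$ enumerating (via $\mathbf a\mapsto\prod_{i\in I}x_{a_i}$) the lattice points $\mathbf a\in\mathbb Z_{>0}^I$ which are constant on the blocks of some $C\in\Delta_h\setminus\Gamma_{K,h}$ and strictly increasing from block to block.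
   Context: A combinatorial Hopf monoid $H$ consists of: for each finite set $I$ a finite set $H_I$, with $H_\emptyset=\{1\}$, and bijections $H_\sigma:H_I\to H_J$ for bijections $\sigma:I\to J$, functorially; associative products $H_S\times H_T\to H_{S\sqcup T}$, $(f,g)\mapsto f\cdot g$, with unit $1$; and for each $S\subseteq I$ partial maps (restriction) $h\mapsto h|_S\in H_S$ and (contraction) $h\mapsto h/S\in H_{I\setminus S}$, with $h|_I=h$, $h/\emptyset=h$, all maps compatible with relabelings, such that for $T\subseteq S\subseteq I$: $(h|_S)|_T=h|_T$, $(h/T)/(S\setminus T)=h/S$, $(h|_S)/T=(h/T)|_{S\setminus T}$, and for $f\in H_A$, $g\in H_B$, $S\subseteq A\sqcup B$: $(f\cdot g)|_S=f|_{S\cap A}\cdot g|_{S\cap B}$ and $(f\cdot g)/S=f/(S\cap A)\cdot g/(S\cap B)$; in each equation one side is defined iff the other is. A Hopf submonoid $K$ is a family $K_I\subseteq H_I$ closed under relabeling, containing $1$, closed under products, and such that restrictions and contractions of elements of $K$, when defined, lie in $K$. The character $\varphi_K$ is $\varphi_K(h)=1$ if $h\in K_I$ and $0$ otherwise (and $0$ on undefined elements). For a set composition $C=(C_1,\dots,C_k)$ of $I$ (nonempty disjoint blocks with union $I$), set $S_j=C_1\cup\dots\cup C_j$, $S_0=\emptyset$, and the minors $h_j=(h|_{S_j})/S_{j-1}\in H_{C_j}$; $\mathrm{type}(C)=(|C_1|,\dots,|C_k|)$; $M_\alpha$ is the monomial quasisymmetric function. $\Psi_\varphi(h)=\sum_{C}\big(\prod_{j}\varphi(h_j)\big)M_{\mathrm{type}(C)}$,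 the sum over all set compositions of $I$. *)

theory Defs
  imports Main
begin

text \<open>H I is the (finite) set H_I; the sets H_I are assumed pairwise disjoint
  (an element remembers its ground set). Partial maps are modelled with option.\<close>

definition omult :: "('h \<Rightarrow> 'h \<Rightarrow> 'h) \<Rightarrow> 'h option \<Rightarrow> 'h option \<Rightarrow> 'h option" where
  "omult mult x y = (case (x, y) of (Some a, Some b) \<Rightarrow> Some (mult a b) | _ \<Rightarrow> None)"

locale hopf_monoid =
  fixes H :: "'a set \<Rightarrow> 'h set"
    and one :: 'h
    and mult :: "'h \<Rightarrow> 'h \<Rightarrow> 'h"
    and res :: "'a set \<Rightarrow> 'h \<Rightarrow> 'h option"
    and con :: "'a set \<Rightarrow> 'h \<Rightarrow> 'h option"
    and relabel :: "('a \<Rightarrow> 'a) \<Rightarrow> 'h \<Rightarrow> 'h"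
  assumes H_infinite: "infinite I \<Longrightarrow> H I = {}"
    and H_finite: "finite (H I)"
    and H_disj: "h \<in> H I \<Longrightarrow> h \<in> H J \<Longrightarrow> I = J"
    and H_empty: "H {} = {one}"
    and relabel_in: "bij_betw \<sigma> I J \<Longrightarrow> h \<in> H I \<Longrightarrow> relabel \<sigma> h \<in> H J"
    and relabel_cong: "h \<in> H I \<Longrightarrow> (\<forall>x\<in>I. \<sigma> x = \<tau> x) \<Longrightarrow> relabel \<sigma> h = relabel \<tau> h"
    and relabel_id: "h \<in> H I \<Longrightarrow> relabel id h = h"
    and relabel_comp: "bij_betw \<sigma> I J \<Longrightarrow> bij_betw \<tau> J L \<Longrightarrow> h \<in> H I \<Longrightarrow>
         relabel (\<tau> \<circ> \<sigma>) h = relabel \<tau> (relabel \<sigma> h)"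
    and mult_in: "A \<inter> B = {} \<Longrightarrow> f \<in> H A \<Longrightarrow> g \<in> H B \<Longrightarrow> mult f g \<in> H (A \<union> B)"
    and mult_assoc: "A \<inter> B = {} \<Longrightarrow> A \<inter> C = {} \<Longrightarrow> B \<inter> C = {} \<Longrightarrow>
         f \<in> H A \<Longrightarrow> g \<in> H B \<Longrightarrow> k \<in> H C \<Longrightarrow> mult (mult f g) k = mult f (mult g k)"
    and mult_one_left: "f \<in> H A \<Longrightarrow> mult one f = f"
    and mult_one_right: "f \<in> H A \<Longrightarrow> mult f one = f"
    and relabel_mult: "bij_betw \<sigma> (A \<union> B) J \<Longrightarrow> A \<inter> B = {} \<Longrightarrow> f \<in> H A \<Longrightarrow> g \<in> H B \<Longrightarrow>
         relabel \<sigma> (mult f g) = mult (relabel \<sigma> f) (relabel \<sigma> g)"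
    and res_in: "h \<in> H I \<Longrightarrow> S \<subseteq> I \<Longrightarrow> res S h = Some x \<Longrightarrow> x \<in> H S"
    and con_in: "h \<in> H I \<Longrightarrow> S \<subseteq> I \<Longrightarrow> con S h = Some x \<Longrightarrow> x \<in> H (I - S)"
    and res_top: "h \<in> H I \<Longrightarrow> res I h = Some h"
    and con_empty: "h \<in> H I \<Longrightarrow> con {} h = Some h"
    and res_res: "h \<in> H I \<Longrightarrow> T \<subseteq> S \<Longrightarrow> S \<subseteq> I \<Longrightarrow>
         Option.bind (res S h) (res T) = res T h"
    and con_con: "h \<in> H I \<Longrightarrow> T \<subseteq> S \<Longrightarrow> S \<subseteq> I \<Longrightarrow>
         Option.bind (con T h) (con (S - T)) = con S h"
    and res_con: "h \<in> H I \<Longrightarrow> T \<subseteq> S \<Longrightarrow> S \<subseteq> I \<Longrightarrow>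
         Option.bind (res S h) (con T) = Option.bind (con T h) (res (S - T))"
    and res_mult: "A \<inter> B = {} \<Longrightarrow> f \<in> H A \<Longrightarrow> g \<in> H B \<Longrightarrow> S \<subseteq> A \<union> B \<Longrightarrow>
         res S (mult f g) = omult mult (res (S \<inter> A) f) (res (S \<inter> B) g)"
    and con_mult: "A \<inter> B = {} \<Longrightarrow> f \<in> H A \<Longrightarrow> g \<in> H B \<Longrightarrow> S \<subseteq> A \<union> B \<Longrightarrow>
         con S (mult f g) = omult mult (con (S \<inter> A) f) (con (S \<inter> B) g)"
    and relabel_res: "bij_betw \<sigma> I J \<Longrightarrow> h \<in> H I \<Longrightarrow> S \<subseteq> I \<Longrightarrow>
         res (\<sigma> ` S) (relabel \<sigma> h) = map_option (relabel \<sigma>) (res S h)"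
    and relabel_con: "bij_betw \<sigma> I J \<Longrightarrow> h \<in> H I \<Longrightarrow> S \<subseteq> I \<Longrightarrow>
         con (\<sigma> ` S) (relabel \<sigma> h) = map_option (relabel \<sigma>) (con S h)"

definition hopf_submonoid ::
  "('a set \<Rightarrow> 'h set) \<Rightarrow> 'h \<Rightarrow> ('h \<Rightarrow> 'h \<Rightarrow> 'h) \<Rightarrow> ('a set \<Rightarrow> 'h \<Rightarrow> 'h option) \<Rightarrow>
   ('a set \<Rightarrow> 'h \<Rightarrow> 'h option) \<Rightarrow> (('a \<Rightarrow> 'a) \<Rightarrow> 'h \<Rightarrow> 'h) \<Rightarrow> ('a set \<Rightarrow> 'h set) \<Rightarrow> bool" where
  "hopf_submonoid H one mult res con relabel K \<longleftrightarrow>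
     (\<forall>I. K I \<subseteq> H I) \<and>
     (\<forall>\<sigma> I J h. bij_betw \<sigma> I J \<longrightarrow> h \<in> K I \<longrightarrow> relabel \<sigma> h \<in> K J) \<and>
     one \<in> K {} \<and>
     (\<forall>A B f g. A \<inter> B = {} \<longrightarrow> f \<in> K A \<longrightarrow> g \<in> K B \<longrightarrow> mult f g \<in> K (A \<union> B)) \<and>
     (\<forall>I S h x. h \<in> K I \<longrightarrow> S \<subseteq> I \<longrightarrow> res S h = Some x \<longrightarrow> x \<in> K S) \<and>
     (\<forall>I S h x. h \<in> K I \<longrightarrow> S \<subseteq> I \<longrightarrow> con S h = Some x \<longrightarrow> x \<in> K (I - S))"

definition set_composition :: "'a set \<Rightarrow> 'a set list \<Rightarrow> bool" where
  "set_composition I C \<longleftrightarrow> (\<forall>B\<in>set C. B \<noteq> {}) \<and>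
     (\<forall>i<length C. \<forall>j<length C. i \<noteq> j \<longrightarrow> C ! i \<inter> C ! j = {}) \<and> \<Union>(set C) = I"

text \<open>The j-th minor (0-based): (h|S_{j+1})/S_j with S_j the union of the first j blocks.\<close>
definition minor :: "('a set \<Rightarrow> 'h \<Rightarrow> 'h option) \<Rightarrow> ('a set \<Rightarrow> 'h \<Rightarrow> 'h option) \<Rightarrow>
    'h \<Rightarrow> 'a set list \<Rightarrow> nat \<Rightarrow> 'h option" where
  "minor res con h C j =
     Option.bind (res (\<Union>(set (take (Suc j) C))) h) (con (\<Union>(set (take j C))))"

definition Delta :: "('a set \<Rightarrow> 'h \<Rightarrow> 'h option) \<Rightarrow> ('a set \<Rightarrow> 'h \<Rightarrow> 'h option) \<Rightarrow>
    'a set \<Rightarrow> 'h \<Rightarrow> 'a set list set" where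
  "Delta res con I h = {C. set_composition I C \<and> (\<forall>j<length C. minor res con h C j \<noteq> None)}"

definition Gamma :: "('a set \<Rightarrow> 'h \<Rightarrow> 'h option) \<Rightarrow> ('a set \<Rightarrow> 'h \<Rightarrow> 'h option) \<Rightarrow>
    ('a set \<Rightarrow> 'h set) \<Rightarrow> 'a set \<Rightarrow> 'h \<Rightarrow> 'a set list set" where
  "Gamma res con K I h = {C \<in> Delta res con I h.
     \<exists>j<length C. minor res con h C j \<notin> Some ` K (C ! j)}"

definition coarsening :: "'a set list \<Rightarrow> 'a set list \<Rightarrow> bool" where
  "coarsening D C \<longleftrightarrow> (\<exists>Cs. concat Cs = C \<and> (\<forall>G\<in>set Cs. G \<noteq> []) \<and>
       D = map (\<lambda>G. \<Union>(set G)) Cs)"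

definition charK :: "('a set \<Rightarrow> 'h set) \<Rightarrow> 'a set \<Rightarrow> 'h option \<Rightarrow> int" where
  "charK K J x = (case x of None \<Rightarrow> 0 | Some y \<Rightarrow> (if y \<in> K J then 1 else 0))"

text \<open>Quasisymmetric functions are represented as formal power series in variables
  x_1, x_2, ... (indexed by positive naturals): a coefficient function on exponent
  vectors m :: nat \<Rightarrow> nat (m k = exponent of x_k).\<close>
definition monoM :: "nat list \<Rightarrow> (nat \<Rightarrow> nat) \<Rightarrow> int" where
  "monoM \<alpha> m = int (card {ks. sorted_wrt (<) ks \<and> 0 \<notin> set ks \<and> length ks = length \<alpha> \<and>
      m = (\<lambda>k. \<Sum>i<length ks. if ks ! i = k then \<alpha> ! i else 0)})"

definition Psi :: "('a set \<Rightarrow> 'h \<Rightarrow> 'h option) \<Rightarrow> ('a set \<Rightarrow> 'h \<Rightarrow> 'h option) \<Rightarrow>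
    ('a set \<Rightarrow> 'h option \<Rightarrow> int) \<Rightarrow> 'a set \<Rightarrow> 'h \<Rightarrow> (nat \<Rightarrow> nat) \<Rightarrow> int" where
  "Psi res con \<phi> I h m = (\<Sum>C\<in>{C. set_composition I C}.
      (\<Prod>j<length C. \<phi> (C ! j) (minor res con h C j)) * monoM (map card C) m)"

definition Ehrhart :: "'a set \<Rightarrow> 'a set list set \<Rightarrow> (nat \<Rightarrow> nat) \<Rightarrow> int" where
  "Ehrhart I F m = int (card {a :: 'a \<Rightarrow> nat.
      (\<forall>i. i \<notin> I \<longrightarrow> a i = 0) \<and> (\<forall>i\<in>I. 0 < a i) \<and>
      (\<exists>C\<in>F. \<forall>j j' i i'. j < length C \<longrightarrow> j' < length C \<longrightarrow> i \<in> C ! j \<longrightarrow> i' \<in> C ! j' \<longrightarrow>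
          (j = j' \<longrightarrow> a i = a i') \<and> (j < j' \<longrightarrow> a i < a i')) \<and>
      m = (\<lambda>k. card {i\<in>I. a i = k})})"

end

theory Submission
  imports Defs
begin

text \<open>If \<open>D\<close> coarsens \<open>C\<close>, every minor \<open>h|B/A\<close> of \<open>C\<close> is a minor of the minor \<open>h|U/T\<close> of \<open>D\<close>
  in whose block it lies (\<open>T \<subseteq> A \<subseteq> B \<subseteq> U\<close>). As \<open>K\<close> is closed under restriction and
  contraction, all minors of \<open>D\<close> lying in \<open>K\<close> forces all minors of \<open>C\<close> to lie in \<open>K\<close>;
  contrapositively \<open>\<Gamma>\<close> is closed under coarsening. The product of the characters \<open>\<phi>\<^sub>K\<close>
  over the minors is the indicator of \<open>\<Delta> - \<Gamma>\<close>, giving the monomial expansion of \<open>\<Psi>\<close>.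
  Finally, a lattice point counted by the Ehrhart function is the same as a pair \<open>(C, ks)\<close>
  with \<open>C\<close> the list of its level sets ordered by value and \<open>ks\<close> the increasing list of
  these values, and such lists \<open>ks\<close> are exactly what \<open>M\<^bsub>type(C)\<^esub>\<close> counts.\<close>

subsection \<open>Set compositions\<close>

lemma set_composition_nonempty: "set_composition I C \<Longrightarrow> j < length C \<Longrightarrow> C ! j \<noteq> {}"
  unfolding set_composition_def by (auto simp: nth_mem)

lemma set_composition_subset: "set_composition I C \<Longrightarrow> j < length C \<Longrightarrow> C ! j \<subseteq> I"
  unfolding set_composition_def by (auto simp: nth_mem)

lemma set_composition_disjoint:
  "set_composition I C \<Longrightarrow> j < length C \<Longrightarrow> j' < length C \<Longrightarrow> j \<noteq> j' \<Longrightarrow> C ! j \<inter> C ! j' = {}"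
  unfolding set_composition_def by auto

lemma set_composition_cover: "set_composition I C \<Longrightarrow> i \<in> I \<Longrightarrow> \<exists>j<length C. i \<in> C ! j"
  unfolding set_composition_def by (auto simp: in_set_conv_nth)

lemma set_composition_Union: "set_composition I C \<Longrightarrow> \<Union>(set C) = I"
  unfolding set_composition_def by auto

lemma set_composition_length_le:
  assumes sc: "set_composition I C" and fin: "finite I"
  shows "length C \<le> card I"
proof -
  define r where "r j = (SOME i. i \<in> C ! j)" for j
  have r: "r j \<in> C ! j" if "j < length C" for j
    unfolding r_def using set_composition_nonempty[OF sc that] by (simp add: some_in_eq)
  have "inj_on r {..<length C}"
  proof (rule inj_onI)
    fix x y assume "x \<in> {..<length C}" "y \<in> {..<length C}" "r x = r y"
    then show "x = y" using r[of x] r[of y] set_composition_disjoint[OF sc, of x y] by auto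
  qed
  moreover have "r ` {..<length C} \<subseteq> I"
    using r set_composition_subset[OF sc] by auto
  ultimately show ?thesis
    using card_inj_on_le[OF _ _ fin, of r "{..<length C}"] by simp
qed

lemma set_composition_block:
  assumes sc: "set_composition I C" and j: "j < length C"
  shows "C ! j = \<Union>(set (take (Suc j) C)) - \<Union>(set (take j C))"
proof -
  have "x \<notin> \<Union>(set (take j C))" if "x \<in> C ! j" for x
  proof
    assume "x \<in> \<Union>(set (take j C))"
    then obtain i where "i < j" "x \<in> C ! i" by (auto simp: in_set_conv_nth)
    then show False using set_composition_disjoint[OF sc, of i j] j that by auto
  qed
  moreover have "\<Union>(set (take (Suc j) C)) = C ! j \<union> \<Union>(set (take j C))"
    by (simp add: take_Suc_conv_app_nth[OF j])
  ultimately show ?thesis by blast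
qed

lemma finite_set_compositions: "finite I \<Longrightarrow> finite {C. set_composition I C}"
  by (rule finite_subset[of _ "{xs. set xs \<subseteq> Pow I \<and> length xs \<le> card I}"])
     (auto dest: set_composition_length_le set_composition_Union intro: finite_lists_length_le)

subsection \<open>Coarsenings and \<open>\<Gamma>\<close>\<close>

context hopf_monoid begin

lemma minor_in_H:
  assumes "h \<in> H I" "A \<subseteq> B" "B \<subseteq> I" "Option.bind (res B h) (con A) = Some d"
  shows "d \<in> H (B - A)"
proof -
  obtain g where g: "res B h = Some g" "con A g = Some d"
    using assms(4) by (cases "res B h") auto
  show ?thesis using con_in[OF res_in[OF assms(1,3) g(1)] assms(2) g(2)] .
qed

lemma minor_of_minor:
  assumes h: "h \<in> H I" and "T \<subseteq> A" "A \<subseteq> B" "B \<subseteq> U" "U \<subseteq> I"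
  shows "Option.bind (Option.bind (Option.bind (res U h) (con T)) (res (B - T))) (con (A - T))
         = Option.bind (res B h) (con A)"
proof (cases "res U h")
  case None
  have "Option.bind (res U h) (res B) = res B h" using res_res[OF h] assms by auto
  then show ?thesis using None by simp
next
  case (Some g)
  have g: "g \<in> H U" using res_in[OF h _ Some] assms by auto
  have "res B g = res B h" using res_res[OF h, of B U] assms Some by auto
  moreover have "Option.bind (con T g) (res (B - T)) = Option.bind (res B g) (con T)"
    using res_con[OF g, of T B] assms by auto
  moreover have "Option.bind (con T x) (con (A - T)) = con A x" if "res B h = Some x" for x
    using con_con[OF res_in[OF h _ that], of T A] assms by auto
  ultimately show ?thesis using Some by (cases "res B h") simp_all
qed

end

lemma hopf_submonoid_subset: "hopf_submonoid H one mult res con relabel K \<Longrightarrow> K I \<subseteq> H I"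
  by (simp add: hopf_submonoid_def)

lemma hopf_submonoid_minor_closed:
  assumes "hopf_submonoid H one mult res con relabel K"
    and "d \<in> K J" "A \<subseteq> B" "B \<subseteq> J" "Option.bind (res B d) (con A) = Some y"
  shows "y \<in> K (B - A)"
proof -
  obtain e where e: "res B d = Some e" "con A e = Some y"
    using assms(5) by (cases "res B d") auto
  have "e \<in> K B" using assms(1,2,4) e(1) unfolding hopf_submonoid_def by blast
  then show ?thesis using assms(1,3) e(2) unfolding hopf_submonoid_def by blast
qed

lemma (in hopf_monoid) finer_minor_in_submonoid:
  assumes sub: "hopf_submonoid H one mult res con relabel K"
    and h: "h \<in> H I" and TA: "T \<subseteq> A" and AB: "A \<subseteq> B" and BU: "B \<subseteq> U" and UI: "U \<subseteq> I"
    and d: "Option.bind (res U h) (con T) = Some d" "d \<in> K J"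
    and y: "Option.bind (res B h) (con A) = Some y"
  shows "y \<in> K (B - A)"
proof -
  have "T \<subseteq> U" using TA AB BU by blast
  then have "d \<in> H (U - T)" using minor_in_H[OF h _ UI d(1)] by simp
  moreover have "d \<in> H J" using hopf_submonoid_subset[OF sub] d(2) by blast
  ultimately have "B - T \<subseteq> J" using H_disj BU by blast
  moreover have "A - T \<subseteq> B - T" using AB by blast
  moreover have "Option.bind (res (B - T) d) (con (A - T)) = Some y"
    using minor_of_minor[OF h TA AB BU UI] d(1) y by simp
  ultimately have "y \<in> K ((B - T) - (A - T))"
    using hopf_submonoid_minor_closed[OF sub d(2)] by simp
  moreover have "(B - T) - (A - T) = B - A" using TA by blast
  ultimately show ?thesis by simp
qed

lemma concat_index:
  "j < length (concat Cs) \<Longrightarrow>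
     \<exists>k<length Cs. length (concat (take k Cs)) \<le> j \<and> j < length (concat (take (Suc k) Cs))"
proof (induction Cs arbitrary: j)
  case Nil
  then show ?case by simp
next
  case (Cons G Gs)
  show ?case
  proof (cases "j < length G")
    case True
    then show ?thesis by (intro exI[of _ 0]) simp
  next
    case False
    then have "j - length G < length (concat Gs)" using Cons.prems by simp
    then obtain k where "k < length Gs" "length (concat (take k Gs)) \<le> j - length G"
        "j - length G < length (concat (take (Suc k) Gs))"
      using Cons.IH by blast
    then show ?thesis using False by (intro exI[of _ "Suc k"]) auto
  qed
qed

lemma Union_take_coarsening:
  "\<Union>(set (take k (map (\<lambda>G. \<Union>(set G)) Cs))) = \<Union>(set (take (length (concat (take k Cs))) (concat Cs)))"
proof -
  have "concat (take k Cs) = take (length (concat (take k Cs))) (concat Cs)"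
    by (metis append_eq_conv_conj append_take_drop_id concat_append)
  moreover have "\<Union>(set (take k (map (\<lambda>G. \<Union>(set G)) Cs))) = \<Union>(set (concat (take k Cs)))"
    by (auto simp: take_map)
  ultimately show ?thesis by metis
qed

lemma Union_take_mono: "m \<le> n \<Longrightarrow> \<Union>(set (take m C)) \<subseteq> \<Union>(set (take n C))"
  using set_take_subset_set_take by (rule Union_mono)

lemma Gamma_coarsening:
  assumes hm: "hopf_monoid H one mult res con relabel"
    and sub: "hopf_submonoid H one mult res con relabel K"
    and h: "h \<in> H I"
    and C: "C \<in> Gamma res con K I h" and D: "D \<in> Delta res con I h" and "coarsening D C"
  shows "D \<in> Gamma res con K I h"
proof -
  obtain Cs where Cs: "concat Cs = C" "D = map (\<lambda>G. \<Union>(set G)) Cs"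
    using \<open>coarsening D C\<close> unfolding coarsening_def by blast
  obtain j y where j: "j < length C" "minor res con h C j = Some y" "y \<notin> K (C ! j)"
    using C unfolding Gamma_def Delta_def by fastforce
  have sc: "set_composition I C" using C unfolding Gamma_def Delta_def by blast
  obtain k where k: "k < length Cs" "length (concat (take k Cs)) \<le> j"
      "j < length (concat (take (Suc k) Cs))"
    using concat_index[of j Cs] j Cs by auto
  define T where "T = \<Union>(set (take (length (concat (take k Cs))) C))"
  define U where "U = \<Union>(set (take (length (concat (take (Suc k) Cs))) C))"
  define A where "A = \<Union>(set (take j C))"
  define B where "B = \<Union>(set (take (Suc j) C))"
  have TA: "T \<subseteq> A" unfolding T_def A_def using k(2) by (rule Union_take_mono)
  have AB: "A \<subseteq> B" unfolding A_def B_def by (rule Union_take_mono) simp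
  have BU: "B \<subseteq> U" unfolding B_def U_def using k(3) by (intro Union_take_mono) simp
  have UI: "U \<subseteq> I"
    unfolding U_def set_composition_Union[OF sc, symmetric] by (intro Union_mono set_take_subset)
  have "\<Union>(set (take k D)) = T" "\<Union>(set (take (Suc k) D)) = U"
    unfolding T_def U_def Cs(2) Union_take_coarsening Cs(1) by (rule refl)+
  then have mD: "minor res con h D k = Option.bind (res U h) (con T)"
    unfolding minor_def by simp
  have "minor res con h D k \<notin> Some ` K (D ! k)"
  proof
    assume "minor res con h D k \<in> Some ` K (D ! k)"
    then obtain d where "minor res con h D k = Some d" "d \<in> K (D ! k)" by blast
    moreover have "Option.bind (res B h) (con A) = Some y"
      using j(2) unfolding minor_def A_def B_def .
    ultimately have "y \<in> K (B - A)"
      using hopf_monoid.finer_minor_in_submonoid[OF hm sub h TA AB BU UI] mD by simp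
    then show False using j(3) set_composition_block[OF sc j(1)] unfolding A_def B_def by simp
  qed
  moreover have "k < length D" using k(1) Cs(2) by simp
  ultimately show ?thesis using D unfolding Gamma_def by blast
qed

subsection \<open>Monomial expansion of \<open>\<Psi>\<^sub>\<phi>\<^sub>K\<close>\<close>

lemma prod_charK:
  "(\<Prod>j<length C. charK K (C ! j) (minor res con h C j)) =
     (if \<forall>j<length C. minor res con h C j \<in> Some ` K (C ! j) then 1 else 0)"
proof -
  have charK: "charK K J x = (if x \<in> Some ` K J then 1 else 0)" for J x
    by (cases x) (auto simp: charK_def)
  show ?thesis unfolding charK by (auto intro: prod_zero)
qed

lemma Psi_charK_eq_sum:
  assumes "finite I"
  shows "Psi res con (charK K) I h
    = (\<lambda>m. \<Sum>C\<in>Delta res con I h - Gamma res con K I h. monoM (map card C) m)"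
proof
  fix m
  have eq: "Delta res con I h - Gamma res con K I h =
     {C \<in> {C. set_composition I C}. \<forall>j<length C. minor res con h C j \<in> Some ` K (C ! j)}"
    unfolding Delta_def Gamma_def by auto
  show "Psi res con (charK K) I h m
      = (\<Sum>C\<in>Delta res con I h - Gamma res con K I h. monoM (map card C) m)"
    unfolding Psi_def prod_charK eq sum.inter_filter[OF finite_set_compositions[OF assms]]
    by (rule sum.cong) auto
qed

subsection \<open>Lattice points\<close>

definition monoM_terms :: "nat list \<Rightarrow> (nat \<Rightarrow> nat) \<Rightarrow> nat list set" where
  "monoM_terms \<alpha> m = {ks. sorted_wrt (<) ks \<and> 0 \<notin> set ks \<and> length ks = length \<alpha> \<and>
      m = (\<lambda>k. \<Sum>i<length ks. if ks ! i = k then \<alpha> ! i else 0)}"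

lemma monoM_eq_card: "monoM \<alpha> m = int (card (monoM_terms \<alpha> m))"
  unfolding monoM_def monoM_terms_def ..

lemma monoM_terms_set:
  assumes pos: "\<forall>a\<in>set \<alpha>. 0 < a" and ks: "ks \<in> monoM_terms \<alpha> m"
  shows "set ks = {k. 0 < m k}"
proof -
  have len: "length ks = length \<alpha>"
    and m: "m k = (\<Sum>i<length ks. if ks ! i = k then \<alpha> ! i else 0)" for k
    using ks unfolding monoM_terms_def by auto
  have "0 < m k \<longleftrightarrow> (\<exists>i<length ks. ks ! i = k)" for k
  proof
    assume "0 < m k"
    show "\<exists>i<length ks. ks ! i = k"
    proof (rule ccontr)
      assume "\<not> (\<exists>i<length ks. ks ! i = k)"
      then have "m k = 0" unfolding m by (intro sum.neutral) auto
      then show False using \<open>0 < m k\<close> by simp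
    qed
  next
    assume "\<exists>i<length ks. ks ! i = k"
    then obtain i where i: "i < length ks" "ks ! i = k" by blast
    have "0 < \<alpha> ! i" using pos i len by (simp add: nth_mem)
    also have "\<alpha> ! i \<le> m k"
      unfolding m using member_le_sum[of i "{..<length ks}" "\<lambda>i. if ks ! i = k then \<alpha> ! i else 0"] i
      by simp
    finally show "0 < m k" .
  qed
  then show ?thesis by (auto simp: in_set_conv_nth)
qed

lemma finite_monoM_terms:
  assumes "\<forall>a\<in>set \<alpha>. 0 < a"
  shows "finite (monoM_terms \<alpha> m)"
proof -
  have "monoM_terms \<alpha> m \<subseteq> {sorted_list_of_set {k. 0 < m k}}"
    using monoM_terms_set[OF assms] unfolding monoM_terms_def
    by (auto intro: strict_sorted_equal[symmetric] simp: strict_sorted_equal)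
  then show ?thesis using finite_subset by blast
qed

definition block_increasing :: "('a \<Rightarrow> nat) \<Rightarrow> 'a set list \<Rightarrow> bool" where
  "block_increasing a C \<longleftrightarrow> (\<forall>j j' i i'. j < length C \<longrightarrow> j' < length C \<longrightarrow> i \<in> C ! j \<longrightarrow> i' \<in> C ! j' \<longrightarrow>
     (j = j' \<longrightarrow> a i = a i') \<and> (j < j' \<longrightarrow> a i < a i'))"

text \<open>Written as a sum to avoid choosing the block containing \<open>i\<close>: for a set composition at
  most one summand is nonzero, so the value is \<open>ks ! j\<close> on \<open>C ! j\<close> and \<open>0\<close> off \<open>\<Union>(set C)\<close>.\<close>
definition lattice_point :: "'a set list \<Rightarrow> nat list \<Rightarrow> 'a \<Rightarrow> nat" where
  "lattice_point C ks i = (\<Sum>j<length C. if i \<in> C ! j then ks ! j else 0)"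

lemma lattice_point_block:
  assumes sc: "set_composition I C" and j: "j < length C" "i \<in> C ! j"
  shows "lattice_point C ks i = ks ! j"
proof -
  have "lattice_point C ks i = (\<Sum>j'<length C. if j' = j then ks ! j' else 0)"
    unfolding lattice_point_def
  proof (rule sum.cong)
    fix j' assume "j' \<in> {..<length C}"
    then show "(if i \<in> C ! j' then ks ! j' else 0) = (if j' = j then ks ! j' else 0)"
      using set_composition_disjoint[OF sc, of j' j] j by auto
  qed simp
  then show ?thesis using j by simp
qed

lemma lattice_point_outside:
  assumes sc: "set_composition I C" and "i \<notin> I"
  shows "lattice_point C ks i = 0"
proof -
  have "i \<notin> C ! j" if "j < length C" for j
    using set_composition_subset[OF sc that] assms(2) by blast
  then show ?thesis unfolding lattice_point_def by simp
qed

lemma lattice_point_image: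
  assumes sc: "set_composition I C" and len: "length ks = length C"
  shows "lattice_point C ks ` I = set ks"
proof (intro equalityI subsetI)
  fix x assume "x \<in> lattice_point C ks ` I"
  then obtain i where i: "i \<in> I" "x = lattice_point C ks i" by blast
  then obtain j where j: "j < length C" "i \<in> C ! j" using set_composition_cover[OF sc] by blast
  then show "x \<in> set ks" using i lattice_point_block[OF sc j] len by simp
next
  fix x assume "x \<in> set ks"
  then obtain j where j: "j < length C" "x = ks ! j" using len by (auto simp: in_set_conv_nth)
  then obtain i where i: "i \<in> C ! j" using set_composition_nonempty[OF sc] by blast
  then have "i \<in> I" using set_composition_subset[OF sc j(1)] by blast
  then show "x \<in> lattice_point C ks ` I"
    using lattice_point_block[OF sc j(1) i, of ks] j(2) by (intro image_eqI[of _ _ i]) simp_all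
qed

lemma lattice_point_level_set:
  assumes sc: "set_composition I C" and ks: "distinct ks" "length ks = length C"
    and j: "j < length C"
  shows "C ! j = {i\<in>I. lattice_point C ks i = ks ! j}"
proof (intro equalityI subsetI)
  fix i assume "i \<in> C ! j"
  then show "i \<in> {i\<in>I. lattice_point C ks i = ks ! j}"
    using set_composition_subset[OF sc j] lattice_point_block[OF sc j] by blast
next
  fix i assume i: "i \<in> {i\<in>I. lattice_point C ks i = ks ! j}"
  then obtain j' where j': "j' < length C" "i \<in> C ! j'" using set_composition_cover[OF sc] by blast
  then have "ks ! j' = ks ! j" using i lattice_point_block[OF sc j'] by simp
  then have "j' = j" using ks j j' nth_eq_iff_index_eq by metis
  then show "i \<in> C ! j" using j' by simp
qed

lemma card_level_set_lattice_point:
  assumes sc: "set_composition I C" and fin: "finite I" and len: "length ks = length C"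
  shows "card {i\<in>I. lattice_point C ks i = k} = (\<Sum>j<length ks. if ks ! j = k then card (C ! j) else 0)"
proof -
  let ?J = "{j \<in> {..<length C}. ks ! j = k}"
  have "{i\<in>I. lattice_point C ks i = k} = (\<Union>j\<in>?J. C ! j)"
  proof (intro equalityI subsetI)
    fix i assume i: "i \<in> {i\<in>I. lattice_point C ks i = k}"
    then obtain j where j: "j < length C" "i \<in> C ! j" using set_composition_cover[OF sc] by blast
    then show "i \<in> (\<Union>j\<in>?J. C ! j)" using i lattice_point_block[OF sc j] by auto
  next
    fix i assume "i \<in> (\<Union>j\<in>?J. C ! j)"
    then obtain j where j: "j < length C" "i \<in> C ! j" "ks ! j = k" by blast
    then show "i \<in> {i\<in>I. lattice_point C ks i = k}"
      using set_composition_subset[OF sc j(1)] lattice_point_block[OF sc j(1,2)] by auto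
  qed
  moreover have "finite (C ! j)" if "j \<in> ?J" for j
    using set_composition_subset[OF sc] that finite_subset[OF _ fin] by blast
  moreover have "C ! j \<inter> C ! j' = {}" if "j \<in> ?J" "j' \<in> ?J" "j \<noteq> j'" for j j'
    using set_composition_disjoint[OF sc] that by blast
  ultimately have "card {i\<in>I. lattice_point C ks i = k} = (\<Sum>j\<in>?J. card (C ! j))"
    by (simp add: card_UN_disjoint)
  also have "\<dots> = (\<Sum>j<length C. if ks ! j = k then card (C ! j) else 0)"
    by (rule sum.inter_filter) simp
  finally show ?thesis using len by simp
qed

lemma exponent_lattice_point:
  assumes "set_composition I C" "finite I" "length ks = length C"
  shows "(\<lambda>k. card {i\<in>I. lattice_point C ks i = k})
       = (\<lambda>k. \<Sum>j<length ks. if ks ! j = k then map card C ! j else 0)"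
  using card_level_set_lattice_point[OF assms] assms(3) by (auto intro!: sum.cong)

lemma lattice_point_block_increasing:
  assumes sc: "set_composition I C" and ks: "sorted_wrt (<) ks" "length ks = length C"
  shows "block_increasing (lattice_point C ks) C"
  unfolding block_increasing_def
proof (intro allI impI)
  fix j j' i i' assume j: "j < length C" "j' < length C" "i \<in> C ! j" "i' \<in> C ! j'"
  have "j < j' \<Longrightarrow> ks ! j < ks ! j'" using ks j(2) by (simp add: sorted_wrt_iff_nth_less)
  then show "(j = j' \<longrightarrow> lattice_point C ks i = lattice_point C ks i') \<and>
      (j < j' \<longrightarrow> lattice_point C ks i < lattice_point C ks i')"
    using lattice_point_block[OF sc j(1,3)] lattice_point_block[OF sc j(2,4)] by simp
qed

lemma block_increasing_lattice_point:
  assumes sc: "set_composition I C" and zero: "\<forall>i. i \<notin> I \<longrightarrow> a i = 0"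
    and incr: "block_increasing a C"
  obtains ks where "sorted_wrt (<) ks" "length ks = length C" "a = lattice_point C ks"
proof
  define ks where "ks = map (\<lambda>B. a (SOME i. i \<in> B)) C"
  have rep: "(SOME i. i \<in> C ! j) \<in> C ! j" if "j < length C" for j
    using set_composition_nonempty[OF sc that] by (simp add: some_in_eq)
  note incr = incr[unfolded block_increasing_def, rule_format]
  have a: "a i = ks ! j" if "j < length C" "i \<in> C ! j" for i j
    using incr[OF that(1) that(1) that(2) rep[OF that(1)]] that(1) unfolding ks_def by simp
  show "length ks = length C" unfolding ks_def by simp
  show "sorted_wrt (<) ks"
    unfolding sorted_wrt_iff_nth_less
  proof (intro allI impI)
    fix j j' assume "j < j'" "j' < length ks"
    then show "ks ! j < ks ! j'"
      using incr[OF _ _ rep rep, of j j'] unfolding ks_def by simp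
  qed
  show "a = lattice_point C ks"
  proof
    fix i show "a i = lattice_point C ks i"
    proof (cases "i \<in> I")
      case True
      then obtain j where "j < length C" "i \<in> C ! j" using set_composition_cover[OF sc] by blast
      then show ?thesis using a lattice_point_block[OF sc] by simp
    next
      case False
      then show ?thesis using zero lattice_point_outside[OF sc] by simp
    qed
  qed
qed

lemma lattice_point_inj:
  assumes sc: "set_composition I C" and sc': "set_composition I C'"
    and ks: "sorted_wrt (<) ks" "length ks = length C"
    and ks': "sorted_wrt (<) ks'" "length ks' = length C'"
    and eq: "lattice_point C ks = lattice_point C' ks'"
  shows "C = C' \<and> ks = ks'"
proof -
  have "ks = ks'"
    using lattice_point_image[OF sc ks(2)] lattice_point_image[OF sc' ks'(2)] eq ks ks'
      strict_sorted_equal by metis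
  moreover have "distinct ks" using ks(1) strict_sorted_iff by blast
  ultimately have "C ! j = C' ! j" if "j < length C" for j
    using lattice_point_level_set[OF sc _ ks(2) that] lattice_point_level_set[OF sc' _ ks'(2)]
      that eq ks ks' by simp
  then show ?thesis using \<open>ks = ks'\<close> ks(2) ks'(2) by (simp add: nth_equalityI)
qed

lemma set_composition_card_pos:
  assumes sc: "set_composition I C" and fin: "finite I"
  shows "\<forall>a\<in>set (map card C). 0 < a"
proof
  fix a assume "a \<in> set (map card C)"
  then obtain j where j: "j < length C" "a = card (C ! j)" by (auto simp: in_set_conv_nth)
  then show "0 < a"
    using set_composition_nonempty[OF sc j(1)] set_composition_subset[OF sc j(1)]
      finite_subset[OF _ fin] by (simp add: card_gt_0_iff)
qed

lemma monoM_terms_iff_lattice_point: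
  assumes sc: "set_composition I C" and fin: "finite I"
  shows "ks \<in> monoM_terms (map card C) m \<longleftrightarrow> sorted_wrt (<) ks \<and> length ks = length C \<and>
      (\<forall>i\<in>I. 0 < lattice_point C ks i) \<and> m = (\<lambda>k. card {i\<in>I. lattice_point C ks i = k})"
proof -
  have "0 \<notin> set ks \<longleftrightarrow> (\<forall>i\<in>I. 0 < lattice_point C ks i)" if "length ks = length C"
    unfolding lattice_point_image[OF sc that, symmetric] by (force simp: image_iff)
  then show ?thesis
    unfolding monoM_terms_def using exponent_lattice_point[OF sc fin] by auto
qed

lemma Ehrhart_points_eq_image:
  assumes fin: "finite I" and F: "F \<subseteq> {C. set_composition I C}"
  shows "{a. (\<forall>i. i \<notin> I \<longrightarrow> a i = 0) \<and> (\<forall>i\<in>I. 0 < a i) \<and> (\<exists>C\<in>F. block_increasing a C) \<and>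
      m = (\<lambda>k. card {i\<in>I. a i = k})}
    = (\<lambda>(C, ks). lattice_point C ks) ` (SIGMA C:F. monoM_terms (map card C) m)"
    (is "?E = ?pt ` ?S")
proof (intro equalityI subsetI)
  have sc: "set_composition I C" if "C \<in> F" for C using F that by blast
  note terms = monoM_terms_iff_lattice_point[OF sc fin]
  {
    fix a assume "a \<in> ?E"
    then obtain C where C: "C \<in> F" "block_increasing a C" and a: "\<forall>i. i \<notin> I \<longrightarrow> a i = 0"
        "\<forall>i\<in>I. 0 < a i" "m = (\<lambda>k. card {i\<in>I. a i = k})" by blast
    obtain ks where ks: "sorted_wrt (<) ks" "length ks = length C" "a = lattice_point C ks"
      using block_increasing_lattice_point[OF sc[OF C(1)] a(1) C(2)] by blast
    then have "(C, ks) \<in> ?S" using terms[OF C(1)] a C(1) by simp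
    then show "a \<in> ?pt ` ?S" using ks(3) by force
  next
    fix a assume "a \<in> ?pt ` ?S"
    then obtain C ks where C: "C \<in> F" "ks \<in> monoM_terms (map card C) m" "a = lattice_point C ks"
      by auto
    then have ks: "sorted_wrt (<) ks" "length ks = length C" "\<forall>i\<in>I. 0 < lattice_point C ks i"
        "m = (\<lambda>k. card {i\<in>I. lattice_point C ks i = k})"
      using terms[OF C(1)] by blast+
    have "block_increasing (lattice_point C ks) C"
      using lattice_point_block_increasing[OF sc[OF C(1)] ks(1,2)] .
    then show "a \<in> ?E"
      unfolding C(3) using C(1) ks(3,4) lattice_point_outside[OF sc[OF C(1)]] by blast
  }
qed

lemma Ehrhart_eq_sum:
  assumes fin: "finite I" and F: "F \<subseteq> {C. set_composition I C}"
  shows "Ehrhart I F m = (\<Sum>C\<in>F. monoM (map card C) m)"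
proof -
  have sc: "set_composition I C" if "C \<in> F" for C using F that by blast
  let ?S = "SIGMA C:F. monoM_terms (map card C) m"
  have "inj_on (\<lambda>(C, ks). lattice_point C ks) ?S"
  proof (rule inj_onI, clarify)
    fix C ks C' ks'
    assume "C \<in> F" "ks \<in> monoM_terms (map card C) m" "C' \<in> F" "ks' \<in> monoM_terms (map card C') m"
      "lattice_point C ks = lattice_point C' ks'"
    then show "C = C' \<and> ks = ks'"
      using lattice_point_inj[OF sc sc] monoM_terms_iff_lattice_point[OF sc fin] by meson
  qed
  moreover have "finite F" using finite_subset[OF F finite_set_compositions[OF fin]] .
  moreover have "finite (monoM_terms (map card C) m)" if "C \<in> F" for C
    using finite_monoM_terms[OF set_composition_card_pos[OF sc[OF that] fin]] .
  ultimately show ?thesis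
    unfolding Ehrhart_def block_increasing_def[symmetric] Ehrhart_points_eq_image[OF fin F]
    by (simp add: card_image monoM_eq_card)
qed

theorem mainTheorem3:
  fixes H :: "'a set \<Rightarrow> 'h set" and K :: "'a set \<Rightarrow> 'h set" and I :: "'a set" and h :: 'h
  assumes "hopf_monoid H one mult res con relabel"
    and "hopf_submonoid H one mult res con relabel K"
    and "finite I"
    and "h \<in> H I"
  shows "(\<forall>C D. C \<in> Gamma res con K I h \<and> D \<in> Delta res con I h \<and> coarsening D C
            \<longrightarrow> D \<in> Gamma res con K I h)
       \<and> Psi res con (charK K) I h
            = (\<lambda>m. \<Sum>C\<in>Delta res con I h - Gamma res con K I h. monoM (map card C) m)
       \<and> Psi res con (charK K) I h = Ehrhart I (Delta res con I h - Gamma res con K I h)"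
proof (intro conjI allI impI)
  fix C D assume "C \<in> Gamma res con K I h \<and> D \<in> Delta res con I h \<and> coarsening D C"
  then show "D \<in> Gamma res con K I h" using Gamma_coarsening[OF assms(1,2,4)] by blast
next
  show Psi: "Psi res con (charK K) I h
      = (\<lambda>m. \<Sum>C\<in>Delta res con I h - Gamma res con K I h. monoM (map card C) m)"
    using Psi_charK_eq_sum[OF assms(3)] .
  have "Delta res con I h - Gamma res con K I h \<subseteq> {C. set_composition I C}"
    unfolding Delta_def by blast
  then show "Psi res con (charK K) I h = Ehrhart I (Delta res con I h - Gamma res con K I h)"
    unfolding Psi using Ehrhart_eq_sum[OF assms(3)] by auto
qed

end
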